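(* For generic $u\in\mathbb{C}$ and generic $v,w\in\mathbb{C}$ (in particular with all entries defined), the following commutation relations hold: $$[M^{cl}(v),M^{cl}(w)]=0,\qquad [M^{q}(v),M^{q}(w)]=0 .$$
   Context: All matrices are $2N\times 2N$ complex matrices, indexed by $1,\dots,2N$. Entries not listed are zero, and only index pairs lying in $\{1,\dots,2N\}^2$ are meant. Here $\mathrm{i}$ is the imaginary unit, $\lambda_{cl}(v)=\tanh(v)\coth(u-v)$ and $\lambda_q(v)=\tanh(u-v)\coth(v)$. In all formulas $1\le i\le N$, $1\le j\le 2N$ and $k\ge 1$. The matrix $M^{cl}(v)$ is lower triangular, with entries - $M^{cl}_{2i-1,2i-1}=-\mathrm{i}\coth(u-v)$ and $M^{cl}_{2i,2i}=\mathrm{i}\tanh(v)$; - $M^{cl}_{2i-1+2k,\,2i-1}=-\mathrm{i}\,\lambda_{cl}^{k-1}/(\coth(v)\sinh^2(u-v))$; - $M^{cl}_{2i+2k,\,2i}=-\mathrm{i}\,\lambda_{cl}^{k-1}/(\tanh(u-v)\cosh^2(v))$; - $M^{cl}_{j+2k-1,\,j}=-\mathrm{i}\,\lambda_{cl}^{k-1}/(\cosh(v)\sinh(u-v))$. The matrix $M^{q}(v)$ is upper triangular, with entries - $M^{q}_{2i-1,2i-1}=-\mathrm{i}\tanh(u-v)$ and $M^{q}_{2i,2i}=\mathrm{i}\coth(v)$; - $M^{q}_{2i-1,\,2i-1+2k}=\mathrm{i}\,\lambda_q^{k-1}/(\tanh(v)\cosh^2(u-v))$; - $M^{q}_{2i,\,2i+2k}=\mathrm{i}\,\lambda_q^{k-1}/(\coth(u-v)\sinh^2(v))$;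 - $M^{q}_{j,\,j+2k-1}=\mathrm{i}\,\lambda_q^{k-1}/(\sinh(v)\cosh(u-v))$. The matrices $M^{cl}(w)$ and $M^{q}(w)$ are defined by the same formulas with $v$ replaced by $w$. *)

theory Defs
  imports Complex_Main "Jordan_Normal_Form.Matrix"
begin

definition coth :: "complex \<Rightarrow> complex" where
  "coth z = cosh z / sinh z"

definition lam_cl :: "complex \<Rightarrow> complex \<Rightarrow> complex" where
  "lam_cl u v = tanh v * coth (u - v)"

definition lam_q :: "complex \<Rightarrow> complex \<Rightarrow> complex" where
  "lam_q u v = tanh (u - v) * coth v"

text \<open>Entries of M^cl(v), with 1-based row index a and column index b (1 \<le> a,b \<le> 2N).\<close>
definition Mcl_entry :: "complex \<Rightarrow> complex \<Rightarrow> nat \<Rightarrow> nat \<Rightarrow> complex" where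
  "Mcl_entry u v a b =
    (if a = b then (if odd b then - \<i> * coth (u - v) else \<i> * tanh v)
     else if b < a then
       (let d = a - b in
        if odd d then - \<i> * lam_cl u v ^ ((d + 1) div 2 - 1) / (cosh v * sinh (u - v))
        else if odd b then - \<i> * lam_cl u v ^ (d div 2 - 1) / (coth v * sinh (u - v) ^ 2)
        else - \<i> * lam_cl u v ^ (d div 2 - 1) / (tanh (u - v) * cosh v ^ 2))
     else 0)"

definition Mq_entry :: "complex \<Rightarrow> complex \<Rightarrow> nat \<Rightarrow> nat \<Rightarrow> complex" where
  "Mq_entry u v a b =
    (if a = b then (if odd a then - \<i> * tanh (u - v) else \<i> * coth v)
     else if a < b then
       (let d = b - a in
        if odd d then \<i> * lam_q u v ^ ((d + 1) div 2 - 1) / (sinh v * cosh (u - v))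
        else if odd a then \<i> * lam_q u v ^ (d div 2 - 1) / (tanh v * cosh (u - v) ^ 2)
        else \<i> * lam_q u v ^ (d div 2 - 1) / (coth (u - v) * sinh v ^ 2))
     else 0)"

text \<open>The 2N x 2N matrices (Jordan_Normal_Form uses 0-based indices, hence the shift).\<close>
definition Mcl :: "nat \<Rightarrow> complex \<Rightarrow> complex \<Rightarrow> complex mat" where
  "Mcl N u v = mat (2 * N) (2 * N) (\<lambda>(r, c). Mcl_entry u v (r + 1) (c + 1))"

definition Mq :: "nat \<Rightarrow> complex \<Rightarrow> complex \<Rightarrow> complex mat" where
  "Mq N u v = mat (2 * N) (2 * N) (\<lambda>(r, c). Mq_entry u v (r + 1) (c + 1))"

end

theory Submission
  imports Defs
begin

text \<open>Let S be the shift by two rows. Both M^cl(v) and the transpose of M^q(v) have the shape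
  G = Mgen x y c c1 c2 \<lambda>: lower triangular, unchanged when both indices are shifted by two,
  and along every subdiagonal the entries grow by the factor \<lambda> every second step. Hence
  (1 - \<lambda> S) G = y (1 + S) + c K(C) for a fixed sparse matrix K(C), and the hyperbolic addition
  formula shows that C = \<plusminus>cosh u does not depend on the spectral parameter. Since 1 + S and K(C)
  commute, these right-hand sides commute for any two parameters; as 1 - \<lambda> S is unipotent and
  commutes with every such G, the commutation carries over to the matrices G themselves.\<close>

definition shift2_mat :: "nat \<Rightarrow> 'a::comm_ring_1 mat" where
  "shift2_mat n = mat n n (\<lambda>(i, j). if i = j + 2 then 1 else 0)"

lemma shift2_mat_carrier [simp]: "shift2_mat n \<in> carrier_mat n n"
  and shift2_mat_dim [simp]: "dim_row (shift2_mat n) = n" "dim_col (shift2_mat n) = n"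
  by (simp_all add: shift2_mat_def)

lemma shift2_mult_index:
  fixes A :: "'a::comm_ring_1 mat"
  assumes "A \<in> carrier_mat n m" "i < n" "j < m"
  shows "(shift2_mat n * A) $$ (i, j) = (if 2 \<le> i then A $$ (i - 2, j) else 0)"
proof -
  have "(shift2_mat n * A) $$ (i, j) = (\<Sum>k<n. if k = i - 2 \<and> 2 \<le> i then A $$ (k, j) else 0)"
    using assms by (auto simp: shift2_mat_def scalar_prod_def lessThan_atLeast0 intro!: sum.cong)
  also have "\<dots> = (if 2 \<le> i then A $$ (i - 2, j) else 0)"
    using assms by (auto simp: sum.delta)
  finally show ?thesis .
qed

lemma mult_shift2_index:
  fixes A :: "'a::comm_ring_1 mat"
  assumes "A \<in> carrier_mat m n" "i < m" "j < n"
  shows "(A * shift2_mat n) $$ (i, j) = (if j + 2 < n then A $$ (i, j + 2) else 0)"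
proof -
  have "(A * shift2_mat n) $$ (i, j) = (\<Sum>k<n. A $$ (i, k) * (if k = j + 2 then 1 else 0))"
    using assms by (auto simp: shift2_mat_def scalar_prod_def lessThan_atLeast0 intro!: sum.cong)
  also have "\<dots> = (\<Sum>k<n. if k = j + 2 then A $$ (i, k) else 0)"
    by (rule sum.cong) auto
  also have "\<dots> = (if j + 2 < n then A $$ (i, j + 2) else 0)"
    by (simp add: sum.delta)
  finally show ?thesis .
qed

lemma shift2_commute_periodic:
  fixes A :: "'a::comm_ring_1 mat"
  assumes A: "A \<in> carrier_mat n n"
    and periodic: "\<And>i j. i + 2 < n \<Longrightarrow> j + 2 < n \<Longrightarrow> A $$ (i + 2, j + 2) = A $$ (i, j)"
    and lower: "\<And>i j. i < j \<Longrightarrow> j < n \<Longrightarrow> A $$ (i, j) = 0"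
  shows "shift2_mat n * A = A * shift2_mat n"
proof (rule eq_matI)
  fix i j assume "i < dim_row (A * shift2_mat n)" "j < dim_col (A * shift2_mat n)"
  then have i: "i < n" and j: "j < n" using carrier_matD[OF A] by simp_all
  show "(shift2_mat n * A) $$ (i, j) = (A * shift2_mat n) $$ (i, j)"
    unfolding shift2_mult_index[OF A i j] mult_shift2_index[OF A i j]
    using periodic[of "i - 2" j] lower[of i "j + 2"] lower[of "i - 2" j] i j
    by (auto simp: numeral_2_eq_2 Suc_diff_Suc)
qed (use A in auto)

lemma one_minus_shift2_mult_index:
  fixes A :: "'a::comm_ring_1 mat"
  assumes A: "A \<in> carrier_mat n m" and "i < n" "j < m"
  shows "((1\<^sub>m n - l \<cdot>\<^sub>m shift2_mat n) * A) $$ (i, j)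
    = A $$ (i, j) - l * (if 2 \<le> i then A $$ (i - 2, j) else 0)"
proof -
  have "(1\<^sub>m n - l \<cdot>\<^sub>m shift2_mat n) * A = A - l \<cdot>\<^sub>m (shift2_mat n * A)"
    using A by (simp add: minus_mult_distrib_mat[of _ n n] mult_smult_assoc_mat[of _ n n])
  then show ?thesis
    using assms carrier_matD[OF A]
    by (simp del: index_mult_mat add: index_mult_mat(2,3) shift2_mult_index)
qed

lemma one_minus_shift2_cancel:
  fixes X Y :: "'a::comm_ring_1 mat"
  assumes X: "X \<in> carrier_mat n m" and Y: "Y \<in> carrier_mat n m"
    and eq: "(1\<^sub>m n - l \<cdot>\<^sub>m shift2_mat n) * X = (1\<^sub>m n - l \<cdot>\<^sub>m shift2_mat n) * Y"
  shows "X = Y"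
proof (rule eq_matI)
  have "X $$ (i, j) = Y $$ (i, j)" if "i < n" "j < m" for i j
    using that
  proof (induction i rule: less_induct)
    case (less i)
    then have "X $$ (i, j) - l * (if 2 \<le> i then X $$ (i - 2, j) else 0)
             = Y $$ (i, j) - l * (if 2 \<le> i then Y $$ (i - 2, j) else 0)"
      using arg_cong[OF eq, of "\<lambda>M. M $$ (i, j)"]
      by (simp del: index_mult_mat add: one_minus_shift2_mult_index[OF X] one_minus_shift2_mult_index[OF Y])
    with less show ?case
      by (cases "2 \<le> i") auto
  qed
  then show "\<And>i j. i < dim_row Y \<Longrightarrow> j < dim_col Y \<Longrightarrow> X $$ (i, j) = Y $$ (i, j)"
    using Y by auto
qed (use X Y in auto)

lemma one_plus_mat_commute:
  fixes A X :: "'a::comm_ring_1 mat"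
  assumes A: "A \<in> carrier_mat n n" and X: "X \<in> carrier_mat n n" and AX: "A * X = X * A"
  shows "(1\<^sub>m n + A) * X = X * (1\<^sub>m n + A)"
proof -
  have "(1\<^sub>m n + A) * X = X + A * X"
    using add_mult_distrib_mat[OF one_carrier_mat A X] carrier_matD[OF X] by simp
  also have "\<dots> = X * (1\<^sub>m n + A)"
    using mult_add_distrib_mat[OF X one_carrier_mat A] carrier_matD[OF X] AX by simp
  finally show ?thesis .
qed

lemma one_minus_smult_mat_commute:
  fixes A X :: "'a::comm_ring_1 mat"
  assumes A: "A \<in> carrier_mat n n" and X: "X \<in> carrier_mat n n" and AX: "A * X = X * A"
  shows "(1\<^sub>m n - l \<cdot>\<^sub>m A) * X = X * (1\<^sub>m n - l \<cdot>\<^sub>m A)"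
proof -
  have lA: "l \<cdot>\<^sub>m A \<in> carrier_mat n n" using A by simp
  have "(1\<^sub>m n - l \<cdot>\<^sub>m A) * X = X - l \<cdot>\<^sub>m (A * X)"
    using minus_mult_distrib_mat[OF one_carrier_mat lA X] mult_smult_assoc_mat[OF A X]
      carrier_matD[OF X] by simp
  also have "\<dots> = X * (1\<^sub>m n - l \<cdot>\<^sub>m A)"
    using mult_minus_distrib_mat[OF X one_carrier_mat lA] mult_smult_distrib[OF X A]
      carrier_matD[OF X] AX by simp
  finally show ?thesis .
qed

lemma lincomb_mat_commute:
  fixes A B X :: "'a::comm_ring_1 mat"
  assumes A: "A \<in> carrier_mat n n" and B: "B \<in> carrier_mat n n" and X: "X \<in> carrier_mat n n"
    and AX: "A * X = X * A" and BX: "B * X = X * B"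
  shows "(a \<cdot>\<^sub>m A + b \<cdot>\<^sub>m B) * X = X * (a \<cdot>\<^sub>m A + b \<cdot>\<^sub>m B)"
proof -
  have aA: "a \<cdot>\<^sub>m A \<in> carrier_mat n n" and bB: "b \<cdot>\<^sub>m B \<in> carrier_mat n n"
    using A B by simp_all
  have "(a \<cdot>\<^sub>m A + b \<cdot>\<^sub>m B) * X = a \<cdot>\<^sub>m (A * X) + b \<cdot>\<^sub>m (B * X)"
    using add_mult_distrib_mat[OF aA bB X] mult_smult_assoc_mat[OF A X] mult_smult_assoc_mat[OF B X]
    by simp
  also have "\<dots> = X * (a \<cdot>\<^sub>m A + b \<cdot>\<^sub>m B)"
    using mult_add_distrib_mat[OF X aA bB] mult_smult_distrib[OF X A] mult_smult_distrib[OF X B] AX BX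
    by simp
  finally show ?thesis .
qed

lemma mat_commute_by_cancellation:
  fixes T T' G G' P P' :: "'a::comm_ring_1 mat"
  assumes carrier: "T \<in> carrier_mat n n" "T' \<in> carrier_mat n n"
      "G \<in> carrier_mat n n" "G' \<in> carrier_mat n n"
    and cancel: "\<And>X Y. X \<in> carrier_mat n n \<Longrightarrow> Y \<in> carrier_mat n n \<Longrightarrow> T * X = T * Y \<Longrightarrow> X = Y"
      "\<And>X Y. X \<in> carrier_mat n n \<Longrightarrow> Y \<in> carrier_mat n n \<Longrightarrow> T' * X = T' * Y \<Longrightarrow> X = Y"
    and P: "T * G = P" and P': "T' * G' = P'"
    and TG': "T * G' = G' * T" and T'P: "T' * P = P * T'" and PP': "P * P' = P' * P"
  shows "G * G' = G' * G"
proof -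
  have carrier_P: "P \<in> carrier_mat n n" using carrier P by auto
  have "T' * (P * G') = (P * T') * G'"
    using carrier carrier_P T'P by (simp flip: assoc_mult_mat[of T' n n P n G' n])
  also have "\<dots> = P' * P"
    using carrier carrier_P P' PP' by simp
  also have "\<dots> = T' * (G' * P)"
    unfolding P'[symmetric] using carrier carrier_P by simp
  finally have PG': "P * G' = G' * P"
    by (rule cancel(2)[rotated 2]) (use carrier carrier_P in auto)
  have "T * (G * G') = (T * G) * G'"
    using carrier by simp
  also have "\<dots> = G' * (T * G)"
    using P PG' by simp
  also have "\<dots> = (T * G') * G"
    unfolding TG' using carrier by simp
  also have "\<dots> = T * (G' * G)"
    using carrier by simp
  finally show ?thesis
    by (rule cancel(1)[rotated 2]) (use carrier in auto)
qed

definition Kmat :: "nat \<Rightarrow> 'a::comm_ring_1 \<Rightarrow> 'a mat" where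
  "Kmat n C = mat n n (\<lambda>(i, j).
     if i = j then (if even j then C else 0)
     else if i = j + 1 then 1
     else if i = j + 2 then (if odd j then C else 0)
     else 0)"

lemma Kmat_carrier [simp]: "Kmat n C \<in> carrier_mat n n"
  and Kmat_dim [simp]: "dim_row (Kmat n C) = n" "dim_col (Kmat n C) = n"
  by (simp_all add: Kmat_def)

lemma shift2_Kmat_commute: "shift2_mat n * Kmat n C = Kmat n C * shift2_mat n"
  by (rule shift2_commute_periodic) (auto simp: Kmat_def)

text \<open>Indices are 0-based, so the even columns j here are the odd columns 2i-1 of the paper.\<close>

definition Mgen_entry :: "'a::comm_ring_1 \<Rightarrow> 'a \<Rightarrow> 'a \<Rightarrow> 'a \<Rightarrow> 'a \<Rightarrow> 'a \<Rightarrow> nat \<Rightarrow> nat \<Rightarrow> 'a" where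
  "Mgen_entry x y c c1 c2 l i j =
    (if i = j then (if even j then x else y)
     else if j < i then
       (if odd (i - j) then c * l ^ ((i - j) div 2)
        else (if even j then c1 else c2) * l ^ ((i - j) div 2 - 1))
     else 0)"

definition Mgen :: "nat \<Rightarrow> 'a::comm_ring_1 \<Rightarrow> 'a \<Rightarrow> 'a \<Rightarrow> 'a \<Rightarrow> 'a \<Rightarrow> 'a \<Rightarrow> 'a mat" where
  "Mgen n x y c c1 c2 l = mat n n (\<lambda>(i, j). Mgen_entry x y c c1 c2 l i j)"

lemma Mgen_carrier [simp]: "Mgen n x y c c1 c2 l \<in> carrier_mat n n"
  and Mgen_dim [simp]: "dim_row (Mgen n x y c c1 c2 l) = n" "dim_col (Mgen n x y c c1 c2 l) = n"
  by (simp_all add: Mgen_def)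

lemma shift2_Mgen_commute: "shift2_mat n * Mgen n x y c c1 c2 l = Mgen n x y c c1 c2 l * shift2_mat n"
  by (rule shift2_commute_periodic) (auto simp: Mgen_def Mgen_entry_def)

lemma Mgen_entry_add_2:
  assumes "0 < d"
  shows "Mgen_entry x y c c1 c2 l (j + d + 2) j = l * Mgen_entry x y c c1 c2 l (j + d) j"
proof (cases "odd d")
  case True
  with assms show ?thesis by (simp add: Mgen_entry_def)
next
  case False
  then obtain m where d: "d = 2 * m" by (auto elim!: evenE)
  with assms obtain k where "m = Suc k" using gr0_implies_Suc by auto
  with d show ?thesis by (simp add: Mgen_entry_def)
qed

lemma one_minus_shift2_mult_Mgen:
  assumes c1: "c1 - l * x = y" and c2: "c2 - l * y = x" and C: "x - y = c * C"
  shows "(1\<^sub>m n - l \<cdot>\<^sub>m shift2_mat n) * Mgen n x y c c1 c2 l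
    = y \<cdot>\<^sub>m (1\<^sub>m n + shift2_mat n) + c \<cdot>\<^sub>m Kmat n C"
proof (rule eq_matI)
  fix i j assume "i < dim_row (y \<cdot>\<^sub>m (1\<^sub>m n + shift2_mat n) + c \<cdot>\<^sub>m Kmat n C)"
    and "j < dim_col (y \<cdot>\<^sub>m (1\<^sub>m n + shift2_mat n) + c \<cdot>\<^sub>m Kmat n C)"
  then have i: "i < n" and j: "j < n" by simp_all
  have "Mgen n x y c c1 c2 l $$ (i, j) - l * (if 2 \<le> i then Mgen n x y c c1 c2 l $$ (i - 2, j) else 0)
      = (y \<cdot>\<^sub>m (1\<^sub>m n + shift2_mat n) + c \<cdot>\<^sub>m Kmat n C) $$ (i, j)"
  proof -
    have "i < j \<or> i = j \<or> i = j + 1 \<or> i = j + 2 \<or> (\<exists>d. 0 < d \<and> i = j + d + 2)"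
      by presburger
    then consider "i < j" | "i = j" | "i = j + 1" | "i = j + 2" | d where "0 < d" "i = j + d + 2"
      by blast
    then show ?thesis
    proof cases
      case 5
      then show ?thesis
        using i j Mgen_entry_add_2[OF 5(1), of x y c c1 c2 l j]
        by (simp add: Mgen_def Kmat_def shift2_mat_def)
    qed (use i j c1 c2 C in \<open>auto simp: Mgen_def Mgen_entry_def Kmat_def shift2_mat_def algebra_simps\<close>)
  qed
  then show "((1\<^sub>m n - l \<cdot>\<^sub>m shift2_mat n) * Mgen n x y c c1 c2 l) $$ (i, j)
    = (y \<cdot>\<^sub>m (1\<^sub>m n + shift2_mat n) + c \<cdot>\<^sub>m Kmat n C) $$ (i, j)"
    unfolding one_minus_shift2_mult_index[OF Mgen_carrier i j] .
qed simp_all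

theorem Mgen_commute:
  assumes "c1 - l * x = y" "c2 - l * y = x" "x - y = c * C"
    and "c1' - l' * x' = y'" "c2' - l' * y' = x'" "x' - y' = c' * C"
  shows "Mgen n x y c c1 c2 l * Mgen n x' y' c' c1' c2' l' = Mgen n x' y' c' c1' c2' l' * Mgen n x y c c1 c2 l"
proof -
  let ?S = "shift2_mat n" and ?U = "1\<^sub>m n + shift2_mat n" and ?K = "Kmat n C"
  let ?P = "y \<cdot>\<^sub>m ?U + c \<cdot>\<^sub>m ?K" and ?P' = "y' \<cdot>\<^sub>m ?U + c' \<cdot>\<^sub>m ?K"
  have carrier: "?S \<in> carrier_mat n n" "?U \<in> carrier_mat n n" "?K \<in> carrier_mat n n"
    "?P \<in> carrier_mat n n" "?P' \<in> carrier_mat n n" by auto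
  have SU: "?S * ?U = ?U * ?S"
    using one_plus_mat_commute[OF carrier(1,1) refl] by (rule sym)
  have KU: "?K * ?U = ?U * ?K"
    using one_plus_mat_commute[OF carrier(1,3) shift2_Kmat_commute] by simp
  have SP: "?S * ?P = ?P * ?S"
    using lincomb_mat_commute[OF carrier(2,3,1) SU[symmetric] shift2_Kmat_commute[symmetric]] by simp
  have UP': "?U * ?P' = ?P' * ?U"
    using lincomb_mat_commute[OF carrier(2,3,2) refl KU] by simp
  have KP': "?K * ?P' = ?P' * ?K"
    using lincomb_mat_commute[OF carrier(2,3,3) KU[symmetric] refl] by simp
  have PP': "?P * ?P' = ?P' * ?P"
    using lincomb_mat_commute[OF carrier(2,3,5) UP' KP'] by simp
  show ?thesis
    by (rule mat_commute_by_cancellation[OF _ _ Mgen_carrier Mgen_carrier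
          one_minus_shift2_cancel one_minus_shift2_cancel
          one_minus_shift2_mult_Mgen[OF assms(1-3)] one_minus_shift2_mult_Mgen[OF assms(4-6)]
          one_minus_smult_mat_commute[OF carrier(1) Mgen_carrier shift2_Mgen_commute]
          one_minus_smult_mat_commute[OF carrier(1,4) SP] PP'])
      auto
qed

text \<open>Read a, b, p, q as sinh v, cosh v, sinh (u - v), cosh (u - v).\<close>

lemma hyperbolic_quotient_identities:
  fixes a b p q :: complex
  assumes nonzero: "a \<noteq> 0" "b \<noteq> 0" "p \<noteq> 0" "q \<noteq> 0"
    and b: "b\<^sup>2 = a\<^sup>2 + 1" and q: "q\<^sup>2 = p\<^sup>2 + 1"
  shows "- \<i> / (b / a * p\<^sup>2) - a / b * (q / p) * (- \<i> * (q / p)) = \<i> * (a / b)"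
    and "- \<i> / (p / q * b\<^sup>2) - a / b * (q / p) * (\<i> * (a / b)) = - \<i> * (q / p)"
proof -
  have "- \<i> / (b / a * p\<^sup>2) - a / b * (q / p) * (- \<i> * (q / p)) = \<i> * a * (q\<^sup>2 - 1) / (b * p\<^sup>2)"
    using nonzero by (simp add: field_simps power2_eq_square)
  also have "\<dots> = \<i> * (a / b)"
    using nonzero q by (simp add: field_simps power2_eq_square)
  finally show "- \<i> / (b / a * p\<^sup>2) - a / b * (q / p) * (- \<i> * (q / p)) = \<i> * (a / b)" .
  have "- \<i> / (p / q * b\<^sup>2) - a / b * (q / p) * (\<i> * (a / b)) = - \<i> * q * (1 + a\<^sup>2) / (p * b\<^sup>2)"
    using nonzero by (simp add: field_simps power2_eq_square)
  also have "\<dots> = - \<i> * q * b\<^sup>2 / (p * b\<^sup>2)"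
    using b by (simp add: add.commute)
  also have "\<dots> = - \<i> * (q / p)"
    using nonzero by (simp add: field_simps)
  finally show "- \<i> / (p / q * b\<^sup>2) - a / b * (q / p) * (\<i> * (a / b)) = - \<i> * (q / p)" .
qed

lemma Mcl_relations:
  assumes nonzero: "sinh v \<noteq> 0" "cosh v \<noteq> 0" "sinh (u - v) \<noteq> 0" "cosh (u - v) \<noteq> 0"
  shows "- \<i> / (coth v * sinh (u - v) ^ 2) - lam_cl u v * (- \<i> * coth (u - v)) = \<i> * tanh v"
    and "- \<i> / (tanh (u - v) * cosh v ^ 2) - lam_cl u v * (\<i> * tanh v) = - \<i> * coth (u - v)"
    and "- \<i> * coth (u - v) - \<i> * tanh v = - \<i> / (cosh v * sinh (u - v)) * cosh u"
proof -
  have squares: "cosh v ^ 2 = sinh v ^ 2 + 1" "cosh (u - v) ^ 2 = sinh (u - v) ^ 2 + 1"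
    by (simp_all add: cosh_square_eq)
  note identities = hyperbolic_quotient_identities[OF nonzero squares]
  show "- \<i> / (coth v * sinh (u - v) ^ 2) - lam_cl u v * (- \<i> * coth (u - v)) = \<i> * tanh v"
    using identities(1) by (simp add: coth_def lam_cl_def tanh_def)
  show "- \<i> / (tanh (u - v) * cosh v ^ 2) - lam_cl u v * (\<i> * tanh v) = - \<i> * coth (u - v)"
    using identities(2) by (simp add: coth_def lam_cl_def tanh_def)
  have "cosh u = cosh (u - v) * cosh v + sinh (u - v) * sinh v"
    using cosh_add[of "u - v" v] by simp
  then show "- \<i> * coth (u - v) - \<i> * tanh v = - \<i> / (cosh v * sinh (u - v)) * cosh u"
    using nonzero by (simp add: coth_def tanh_def field_simps)
qed

text \<open>M^q(v) is built from the same functions as M^cl(u - v), up to sign.\<close>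

lemma Mq_relations:
  assumes "sinh v \<noteq> 0" "cosh v \<noteq> 0" "sinh (u - v) \<noteq> 0" "cosh (u - v) \<noteq> 0"
  shows "\<i> / (tanh v * cosh (u - v) ^ 2) - lam_q u v * (- \<i> * tanh (u - v)) = \<i> * coth v"
    and "\<i> / (coth (u - v) * sinh v ^ 2) - lam_q u v * (\<i> * coth v) = - \<i> * tanh (u - v)"
    and "- \<i> * tanh (u - v) - \<i> * coth v = \<i> / (sinh v * cosh (u - v)) * (- cosh u)"
proof -
  have lam: "lam_cl u (u - v) = lam_q u v"
    by (simp add: lam_cl_def lam_q_def)
  note cl = Mcl_relations[of "u - v" u, unfolded diff_diff_eq2 add_diff_cancel_left' lam]
  show "\<i> / (tanh v * cosh (u - v) ^ 2) - lam_q u v * (- \<i> * tanh (u - v)) = \<i> * coth v"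
    using arg_cong[OF cl(2), of uminus] assms by (simp add: algebra_simps)
  show "\<i> / (coth (u - v) * sinh v ^ 2) - lam_q u v * (\<i> * coth v) = - \<i> * tanh (u - v)"
    using arg_cong[OF cl(1), of uminus] assms by (simp add: algebra_simps)
  show "- \<i> * tanh (u - v) - \<i> * coth v = \<i> / (sinh v * cosh (u - v)) * (- cosh u)"
    using cl(3) assms by (simp add: algebra_simps)
qed

lemma Mcl_eq_Mgen:
  "Mcl N u v = Mgen (2 * N) (- \<i> * coth (u - v)) (\<i> * tanh v) (- \<i> / (cosh v * sinh (u - v)))
     (- \<i> / (coth v * sinh (u - v) ^ 2)) (- \<i> / (tanh (u - v) * cosh v ^ 2)) (lam_cl u v)"
  by (rule eq_matI) (auto simp: Mcl_def Mcl_entry_def Mgen_def Mgen_entry_def Let_def)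

lemma transpose_Mq_eq_Mgen:
  "transpose_mat (Mq N u v) = Mgen (2 * N) (- \<i> * tanh (u - v)) (\<i> * coth v) (\<i> / (sinh v * cosh (u - v)))
     (\<i> / (tanh v * cosh (u - v) ^ 2)) (\<i> / (coth (u - v) * sinh v ^ 2)) (lam_q u v)"
  by (rule eq_matI) (auto simp: Mq_def Mq_entry_def Mgen_def Mgen_entry_def Let_def)

lemma transpose_commute_iff:
  fixes A B :: "'a::comm_ring_1 mat"
  assumes "A \<in> carrier_mat n n" "B \<in> carrier_mat n n"
  shows "transpose_mat A * transpose_mat B = transpose_mat B * transpose_mat A \<longleftrightarrow> A * B = B * A"
  using assms by (metis transpose_mult transpose_transpose)

theorem mainTheorem4:
  fixes N :: nat and u v w :: complex
  assumes "sinh v \<noteq> 0" "cosh v \<noteq> 0" "sinh (u - v) \<noteq> 0" "cosh (u - v) \<noteq> 0"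
      and "sinh w \<noteq> 0" "cosh w \<noteq> 0" "sinh (u - w) \<noteq> 0" "cosh (u - w) \<noteq> 0"
  shows "Mcl N u v * Mcl N u w = Mcl N u w * Mcl N u v \<and>
         Mq N u v * Mq N u w = Mq N u w * Mq N u v"
proof
  show "Mcl N u v * Mcl N u w = Mcl N u w * Mcl N u v"
    unfolding Mcl_eq_Mgen
    by (rule Mgen_commute[OF Mcl_relations[OF assms(1-4)] Mcl_relations[OF assms(5-8)]])
  have "transpose_mat (Mq N u v) * transpose_mat (Mq N u w)
      = transpose_mat (Mq N u w) * transpose_mat (Mq N u v)"
    unfolding transpose_Mq_eq_Mgen
    by (rule Mgen_commute[OF Mq_relations[OF assms(1-4)] Mq_relations[OF assms(5-8)]])
  then show "Mq N u v * Mq N u w = Mq N u w * Mq N u v"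
    by (simp add: transpose_commute_iff[of _ "2 * N"] Mq_def)
qed

end
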